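(* For each $a\in S^A$, let $P^A_a=\sum_{\alpha\in\Omega^A}P^A_{f_a(\alpha)}$ and $K^{A'}_a=\sqrt{P^A_a}\otimes|a\rangle_{\tilde A}$. Define $$\mathcal G'(\sigma)=V\Pi\Big(\sum_{a\in S^A,b\in S^B}(K^{A'}_a\otimes K^B_b)\sigma(K^{A'}_a\otimes K^B_b)^\dagger\Big)\Pi V^\dagger,$$ which is $\mathcal G$ with the register $\bar A$ omitted. Then for every density operator $\rho_{AB}$ on $H_A\otimes H_B$, $$D\big(\mathcal G(\rho_{AB})\,\|\,\mathcal Z[\mathcal G(\rho_{AB})]\big)=D\big(\mathcal G'(\rho_{AB})\,\|\,\mathcal Z[\mathcal G'(\rho_{AB})]\big).$$
   Context: Setting (reverse-reconciliation postprocessing). Registers and measurements. $H_A,H_B$ are finite-dimensional Hilbert spaces. Alice has a POVM $\{P^A_x\}_{x\in\mathcal X}$ on $H_A$, and Bob has a POVM $\{P^B_y\}_{y\in\mathcal Y}$ on $H_B$. Alice's announcement set $S^A$ gives a partition $\mathcal X=\bigcup_{a\in S^A}\mathcal X_a$ with $|\mathcal X_a|=\omega_A$ for all $a$. Bob's announcement set $S^B$ gives a partition $\mathcal Y=\bigcup_{b\in S^B}\mathcal Y_b$ with $|\mathcal Y_b|=\omega_B$ for all $b$. Fix bijections $f_a:\Omega^A=\{1,\dots,\omega_A\}\to\mathcal X_a$ and $f_b:\Omega^B=\{1,\dots,\omega_B\}\to\mathcal Y_b$. The registers $\tilde A,\tilde B,\bar A,\bar B$ have orthonormal bases $\{|a\rangle\}_{a\in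 S^A}$, $\{|b\rangle\}_{b\in S^B}$, $\{|\alpha\rangle\}_{\alpha\in\Omega^A}$ and $\{|\beta\rangle\}_{\beta\in\Omega^B}$ respectively. Announcement map. Define $$K^A_a=\sum_{\alpha\in\Omega^A}\sqrt{P^A_{f_a(\alpha)}}\otimes|a\rangle_{\tilde A}\otimes|\alpha\rangle_{\bar A},\qquad K^B_b=\sum_{\beta\in\Omega^B}\sqrt{P^B_{f_b(\beta)}}\otimes|b\rangle_{\tilde B}\otimes|\beta\rangle_{\bar B},$$ and $\mathcal A(\sigma)=\sum_{a\in S^A,b\in S^B}(K^A_a\otimes K^B_b)\sigma(K^A_a\otimes K^B_b)^\dagger$. Sifting. Fix a subset $\mathbf K\subseteq S^A\times S^B$ of kept announcements and let $\Pi=\sum_{(a,b)\in\mathbf K}|a\rangle\langle a|_{\tilde A}\otimes|b\rangle\langle b|_{\tilde B}$. Key map. Fix a key map $g:\mathbf K\times\mathcal Y\to\{0,\dots,N-1\}$, which does not depend on Alice's outcome (reverse reconciliation). The register $R$ has orthonormal basis $\{|j\rangle\}_{j=0}^{N-1}$. Define $$V=\sum_{(a,b)\in\mathbf K,\ \beta\in\Omega^B}|g(a,b,f_b(\beta))\rangle_R\otimes|a\rangle\langle a|_{\tilde A}\otimes|b\rangle\langle b|_{\tilde B}\otimes|\beta\rangle\langle\beta|_{\bar B}.$$ Maps. $\mathcal G(\sigma)=V\Pi\mathcal A(\sigma)\Pi V^\dagger$, and $\mathcal Z(\sigma)=\sum_{j=0}^{N-1}(|j\rangle\langle j|_R\otimes\mathbb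 1)\sigma(|j\rangle\langle j|_R\otimes\mathbb 1)$. Relative entropy. $D(\rho\|\sigma)=\operatorname{Tr}(\rho\log_2\rho)-\operatorname{Tr}(\rho\log_2\sigma)$, used also for subnormalized positive operators. *)

theory Defs
  imports "HOL-Analysis.Analysis" "HOL-Library.Extended_Real"
begin

text \<open>Operators between finite-dimensional Hilbert spaces are complex matrices
  indexed by finite types (the index type is an orthonormal basis of the space).
  A matrix of type complex^'n^'m maps the space with basis 'n to the space with
  basis 'm.  Tensor products of spaces correspond to product index types.\<close>

definition adjoint :: "complex^'n^'m \<Rightarrow> complex^'m^'n" where
  "adjoint M = (\<chi> i j. cnj (M $ j $ i))"

definition hermitian :: "complex^'n^'n \<Rightarrow> bool" where
  "hermitian M \<longleftrightarrow> adjoint M = M"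

definition unitary :: "complex^'n^'n \<Rightarrow> bool" where
  "unitary U \<longleftrightarrow> adjoint U ** U = mat 1 \<and> U ** adjoint U = mat 1"

definition cinner :: "complex^'n \<Rightarrow> complex^'n \<Rightarrow> complex" where
  "cinner v w = (\<Sum>i\<in>UNIV. cnj (v $ i) * w $ i)"

definition psd :: "complex^'n^'n \<Rightarrow> bool" where
  "psd M \<longleftrightarrow> hermitian M \<and> (\<forall>v. 0 \<le> Re (cinner v (M *v v)))"

definition density_op :: "complex^'n^'n \<Rightarrow> bool" where
  "density_op \<rho> \<longleftrightarrow> psd \<rho> \<and> trace \<rho> = 1"

definition povm :: "('x::finite \<Rightarrow> complex^'n^'n) \<Rightarrow> bool" where
  "povm P \<longleftrightarrow> (\<forall>x. psd (P x)) \<and> (\<Sum>x\<in>UNIV. P x) = mat 1"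

definition rdiag :: "('n \<Rightarrow> real) \<Rightarrow> complex^'n^'n" where
  "rdiag d = (\<chi> i j. if i = j then complex_of_real (d i) else 0)"

definition mat_fun :: "(real \<Rightarrow> real) \<Rightarrow> complex^'n^'n \<Rightarrow> complex^'n^'n" where
  "mat_fun f M = (SOME N. \<exists>U d. unitary U \<and> M = U ** rdiag d ** adjoint U
                          \<and> N = U ** rdiag (f \<circ> d) ** adjoint U)"

definition msqrt :: "complex^'n^'n \<Rightarrow> complex^'n^'n" where
  "msqrt M = mat_fun sqrt M"

text \<open>log2 on the support (eigenvalue 0 is mapped to 0); together with the support
  condition in rel_entropy this is the standard convention.\<close>
definition mlog2 :: "complex^'n^'n \<Rightarrow> complex^'n^'n" where
  "mlog2 M = mat_fun (\<lambda>x. if 0 < x then log 2 x else 0) M"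

definition rel_entropy :: "complex^'n^'n \<Rightarrow> complex^'n^'n \<Rightarrow> ereal" where
  "rel_entropy \<rho> \<sigma> =
     (if \<forall>v. \<sigma> *v v = 0 \<longrightarrow> \<rho> *v v = 0
      then ereal (Re (trace (\<rho> ** mlog2 \<rho>) - trace (\<rho> ** mlog2 \<sigma>)))
      else \<infinity>)"

definition kron :: "complex^'n1::finite^'m1::finite \<Rightarrow> complex^'n2::finite^'m2::finite \<Rightarrow> complex^('n1 \<times> 'n2)^('m1 \<times> 'm2)" where
  "kron A B = (\<chi> i j. A $ fst i $ fst j * B $ snd i $ snd j)"

text \<open>A \<otimes> |s>  (appending a register in basis state s to the output).\<close>
definition op_ket :: "complex^'n^'m \<Rightarrow> 's::finite \<Rightarrow> complex^'n^('m \<times> 's)" where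
  "op_ket A s = (\<chi> i j. if snd i = s then A $ fst i $ j else 0)"

text \<open>Kraus operators K^A_a = sum_alpha sqrt(P^A_{f_a(alpha)}) (x) |a> (x) |alpha>
  (same formula for Bob).\<close>
definition Kraus :: "('x \<Rightarrow> complex^'h::finite^'h) \<Rightarrow> ('s::finite \<Rightarrow> 'w::finite \<Rightarrow> 'x) \<Rightarrow> 's
                     \<Rightarrow> complex^'h^(('h \<times> 's) \<times> 'w)" where
  "Kraus P f a = (\<Sum>\<alpha>\<in>UNIV. op_ket (op_ket (msqrt (P (f a \<alpha>))) a) \<alpha>)"

definition Kraus' :: "('x \<Rightarrow> complex^'h::finite^'h) \<Rightarrow> ('s::finite \<Rightarrow> 'w::finite \<Rightarrow> 'x) \<Rightarrow> 's
                     \<Rightarrow> complex^'h^('h \<times> 's)" where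
  "Kraus' P f a = op_ket (msqrt (\<Sum>\<alpha>\<in>UNIV. P (f a \<alpha>))) a"

definition announce :: "('sa::finite \<Rightarrow> complex^'ha^'ea) \<Rightarrow> ('sb::finite \<Rightarrow> complex^'hb^'eb)
     \<Rightarrow> complex^('ha \<times> 'hb)^('ha \<times> 'hb) \<Rightarrow> complex^('ea \<times> 'eb)^('ea \<times> 'eb)" where
  "announce KA KB \<sigma> = (\<Sum>a\<in>UNIV. \<Sum>b\<in>UNIV.
       kron (KA a) (KB b) ** \<sigma> ** adjoint (kron (KA a) (KB b)))"

text \<open>Sifting projector Pi = sum_{(a,b) in K} |a><a| (x) |b><b| (identity elsewhere);
  selA extracts Alice's announcement a from a basis index of Alice's output system.\<close>
definition sift_proj :: "('ea::finite \<Rightarrow> 'sa) \<Rightarrow> ('sa \<times> 'sb) set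
     \<Rightarrow> complex^('ea \<times> (('hb::finite \<times> 'sb::finite) \<times> 'wb::finite))^('ea \<times> (('hb \<times> 'sb) \<times> 'wb))" where
  "sift_proj selA Ks = (\<chi> i j. if i = j \<and> (selA (fst i), snd (fst (snd i))) \<in> Ks then 1 else 0)"

text \<open>Key isometry V = sum_{(a,b) in K, beta} |g(a,b,f_b(beta))>_R (x) |a><a| (x) |b><b| (x) |beta><beta|
  (identity on the remaining factors), written entrywise.\<close>
definition key_op :: "('ea::finite \<Rightarrow> 'sa) \<Rightarrow> ('sa \<times> 'sb::finite) set \<Rightarrow> ('sa \<Rightarrow> 'sb \<Rightarrow> 'y \<Rightarrow> 'r::finite)
     \<Rightarrow> ('sb \<Rightarrow> 'wb::finite \<Rightarrow> 'y)
     \<Rightarrow> complex^('ea \<times> (('hb::finite \<times> 'sb) \<times> 'wb))^('r \<times> ('ea \<times> (('hb \<times> 'sb) \<times> 'wb)))" where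
  "key_op selA Ks g fB = (\<chi> i j.
      if snd i = j \<and> (selA (fst (snd i)), snd (fst (snd (snd i)))) \<in> Ks
         \<and> fst i = g (selA (fst (snd i))) (snd (fst (snd (snd i))))
                    (fB (snd (fst (snd (snd i)))) (snd (snd (snd i))))
      then 1 else 0)"

definition G_map where
  "G_map PA fA PB fB Ks g \<sigma> =
     (let V = key_op (\<lambda>e. snd (fst e)) Ks g fB; Pr = sift_proj (\<lambda>e. snd (fst e)) Ks
      in V ** Pr ** announce (Kraus PA fA) (Kraus PB fB) \<sigma> ** Pr ** adjoint V)"

definition G'_map where
  "G'_map PA fA PB fB Ks g \<sigma> =
     (let V = key_op snd Ks g fB; Pr = sift_proj snd Ks
      in V ** Pr ** announce (Kraus' PA fA) (Kraus PB fB) \<sigma> ** Pr ** adjoint V)"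

definition projR :: "'r::finite \<Rightarrow> complex^('r \<times> 'x::finite)^('r \<times> 'x)" where
  "projR j = kron (\<chi> r r'. if r = j \<and> r' = j then 1 else 0) (mat 1)"

definition pinch :: "complex^('r::finite \<times> 'x::finite)^('r \<times> 'x) \<Rightarrow> complex^('r \<times> 'x)^('r \<times> 'x)" where
  "pinch \<sigma> = (\<Sum>j\<in>UNIV. projR j ** \<sigma> ** projR j)"

end

theory Submission
  imports Defs
begin

text \<open>Write the state as \<rho> = R R\<dagger>. Then G(\<rho>) = C C\<dagger>, where C places the branch
  operators M(a,b) = V \<Pi> (K_a \<otimes> K_b) R side by side, and Z[G(\<rho>)] = D D\<dagger>, where D
  splits C into blocks along the key value. As log Z[Y] is block diagonal,
  Tr(Y log Z[Y]) = Tr(Z[Y] log Z[Y]); as f(X X\<dagger>) X = X f(X\<dagger> X), and as pinching does not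
  enlarge the kernel of a Gram operator, the relative entropy equals
  Tr(C\<dagger>C log C\<dagger>C) - Tr(D\<dagger>D log D\<dagger>D), a function of the two Gram matrices alone. Their
  entries are M(s)\<dagger> \<Pi>_j M(s') with \<Pi>_j the projector onto key value j. Sifting and key
  depend on Alice only through her announcement a, so these entries factor through
  K_a\<dagger> K_a' = \<delta>(a,a') P_a, which is the same for both Kraus families.\<close>

section \<open>Adjoints and the complex inner product\<close>

lemma adjoint_nth [simp]: "adjoint M $ i $ j = cnj (M $ j $ i)"
  by (simp add: adjoint_def)

lemma adjoint_adjoint [simp]: "adjoint (adjoint M) = M"
  by (simp add: vec_eq_iff)

lemma adjoint_mult: "adjoint (A ** B) = adjoint B ** adjoint A"
  by (simp add: vec_eq_iff matrix_matrix_mult_def mult.commute)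

lemma adjoint_add: "adjoint (A + B) = adjoint A + adjoint B"
  by (simp add: vec_eq_iff)

lemma hermitian_gram: "hermitian (C ** adjoint C)"
  by (simp add: hermitian_def adjoint_mult)

lemma hermitian_gram': "hermitian (adjoint C ** C)"
  by (simp add: hermitian_def adjoint_mult)

lemma matrix_add_rdistrib: "(B + C) ** (A::'a::semiring_1^'n^'m) = B ** A + C ** A"
  by (simp add: vec_eq_iff matrix_matrix_mult_def distrib_right sum.distrib)

lemma matrix_mul_sum_right: "(A::'a::semiring_1^'n^'m) ** sum f S = (\<Sum>x\<in>S. A ** f x)"
  by (induction S rule: infinite_finite_induct) (auto simp: matrix_add_ldistrib)

lemma matrix_mul_sum_left: "sum f S ** (A::'a::semiring_1^'n^'m) = (\<Sum>x\<in>S. f x ** A)"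
  by (induction S rule: infinite_finite_induct) (auto simp: matrix_add_rdistrib)

lemma sum_UNIV_prod:
  "(\<Sum>z\<in>(UNIV::('a::finite \<times> 'b::finite) set). g z) = (\<Sum>x\<in>UNIV. \<Sum>y\<in>UNIV. g (x, y))"
  by (simp add: sum.cartesian_product)

lemma cinner_add_left: "cinner (a + b) c = cinner a c + cinner b c"
  by (simp add: cinner_def distrib_right sum.distrib)

lemma cinner_add_right: "cinner c (a + b) = cinner c a + cinner c b"
  by (simp add: cinner_def distrib_left sum.distrib)

lemma cinner_diff_right: "cinner c (a - b) = cinner c a - cinner c b"
  by (simp add: cinner_def right_diff_distrib sum_subtractf)

lemma cinner_zero_right [simp]: "cinner c 0 = 0"
  by (simp add: cinner_def)

lemma cinner_scale_left: "cinner (x *s a) c = cnj x * cinner a c"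
  by (simp add: cinner_def sum_distrib_left mult.assoc)

lemma cinner_scale_right: "cinner c (x *s a) = x * cinner c a"
  by (simp add: cinner_def sum_distrib_left algebra_simps)

lemma scaleR_eq_scale: "r *\<^sub>R (a::complex^'n) = of_real r *s a"
  by (simp add: vec_eq_iff) (simp add: scaleR_conv_of_real)

lemma cinner_scaleR_left: "cinner (r *\<^sub>R a) c = of_real r * cinner a c"
  by (simp add: scaleR_eq_scale cinner_scale_left)

lemma cinner_scaleR_right: "cinner c (r *\<^sub>R a) = of_real r * cinner c a"
  by (simp add: scaleR_eq_scale cinner_scale_right)

lemma matrix_vector_mult_scaleR_complex: "(M::complex^'n^'m) *v (r *\<^sub>R a) = r *\<^sub>R (M *v a)"
  by (simp add: scaleR_eq_scale vector_scalar_commute)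

lemma cinner_commute: "cinner w v = cnj (cinner v w)"
  by (simp add: cinner_def mult.commute)

lemma cinner_adjoint: "cinner v (A *v w) = cinner (adjoint A *v v) w"
proof -
  have "cinner v (A *v w) = (\<Sum>i\<in>UNIV. \<Sum>k\<in>UNIV. cnj (v $ i) * A $ i $ k * w $ k)"
    by (simp add: cinner_def matrix_vector_mult_def sum_distrib_left mult.assoc)
  also have "\<dots> = (\<Sum>k\<in>UNIV. \<Sum>i\<in>UNIV. cnj (v $ i) * A $ i $ k * w $ k)"
    by (rule sum.swap)
  also have "\<dots> = cinner (adjoint A *v v) w"
    by (simp add: cinner_def matrix_vector_mult_def sum_distrib_left sum_distrib_right mult_ac)
  finally show ?thesis .
qed

lemma cinner_hermitian: "hermitian M \<Longrightarrow> cinner v (M *v w) = cinner (M *v v) w"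
  by (metis cinner_adjoint hermitian_def)

lemma cinner_self: "cinner v v = of_real ((norm v)\<^sup>2)"
proof -
  have "(norm v)\<^sup>2 = (\<Sum>i\<in>UNIV. (cmod (v $ i))\<^sup>2)"
    by (simp add: norm_vec_def L2_set_def sum_nonneg)
  moreover have "cinner v v = (\<Sum>i\<in>UNIV. of_real ((cmod (v $ i))\<^sup>2))"
    unfolding cinner_def
    by (rule sum.cong) (auto simp: complex_norm_square mult.commute simp del: of_real_power)
  ultimately show ?thesis by simp
qed

lemma cinner_self_eq_0_iff: "cinner v v = 0 \<longleftrightarrow> v = 0"
  by (simp add: cinner_self)

lemma cinner_gram: "cinner v ((C ** adjoint C) *v v) = cinner (adjoint C *v v) (adjoint C *v v)"
  by (simp add: cinner_adjoint matrix_vector_mul_assoc[symmetric] adjoint_mult)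

lemma continuous_on_cinner [continuous_intros]:
  "continuous_on S f \<Longrightarrow> continuous_on S g \<Longrightarrow> continuous_on S (\<lambda>x. cinner (f x) (g x :: complex^'n))"
  unfolding cinner_def by (intro continuous_intros)

lemma continuous_on_matrix_vector_mult [continuous_intros]:
  "continuous_on S f \<Longrightarrow> continuous_on S (\<lambda>x. (M::complex^'n^'m) *v f x)"
  unfolding matrix_vector_mult_def by (intro continuous_intros)

section \<open>The spectral theorem for Hermitian matrices\<close>

lemma linear_coeff_zero_if_quadratic_nonpos:
  fixes a b :: real
  assumes "\<And>t. a * t + b * t\<^sup>2 \<le> 0"
  shows "a = 0"
proof (rule ccontr)
  assume a: "a \<noteq> 0"
  define c where "c = \<bar>b\<bar> + 1"
  have c: "c > 0" "c + b > 0" unfolding c_def by auto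
  have "a * (a/c) + b * (a/c)\<^sup>2 = a\<^sup>2 * (c + b) / c\<^sup>2"
    using c by (simp add: field_simps power2_eq_square)
  also have "\<dots> > 0" using a c by (simp add: divide_pos_pos)
  finally show False using assms[of "a/c"] by simp
qed

lemma exists_nonzero_orthogonal:
  fixes u :: "'n::finite \<Rightarrow> complex^'n"
  assumes "j \<notin> I"
  shows "\<exists>x. x \<noteq> 0 \<and> (\<forall>i\<in>I. cinner (u i) x = 0)"
proof -
  define A :: "complex^'n^'n" where "A = (\<chi> i k. if i \<in> I then cnj (u i $ k) else 0)"
  have "\<not> (\<exists>B. A ** B = mat 1)"
  proof
    assume "\<exists>B. A ** B = mat 1"
    then obtain B where "A ** B = mat 1" by blast
    then have "(A ** B) $ j $ j = 1" by (simp add: mat_def)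
    moreover have "(A ** B) $ j $ j = 0" using assms by (simp add: A_def matrix_matrix_mult_def)
    ultimately show False by simp
  qed
  then have "\<not> (\<exists>B. B ** A = mat 1)" using matrix_left_right_inverse by blast
  then obtain x where "A *v x = 0" "x \<noteq> 0" using matrix_left_invertible_ker[of A] by blast
  moreover have "cinner (u i) x = (A *v x) $ i" if "i \<in> I" for i
    using that by (simp add: A_def cinner_def matrix_vector_mult_def)
  ultimately show ?thesis by auto
qed

text \<open>The variational characterisation: a unit vector maximising the Rayleigh quotient on a
  subspace S is orthogonal to M applied to the rest of S, hence an eigenvector if S is invariant.\<close>

context
  fixes M :: "complex^'n^'n" and S :: "(complex^'n) set" and v :: "complex^'n"
  assumes herm: "hermitian M"
    and S_add: "\<And>a b. a \<in> S \<Longrightarrow> b \<in> S \<Longrightarrow> a + b \<in> S"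
    and S_scale: "\<And>a c. a \<in> S \<Longrightarrow> c *s a \<in> S"
    and vS: "v \<in> S" and vv: "cinner v v = 1"
    and max: "\<And>y. y \<in> S \<Longrightarrow> Re (cinner y (M *v y)) \<le> Re (cinner v (M *v v)) * (norm y)\<^sup>2"
begin

lemma rayleigh_maximiser_orthogonal:
  assumes w: "w \<in> S" "cinner v w = 0"
  shows "cinner w (M *v v) = 0"
proof -
  define lam where "lam = Re (cinner v (M *v v))"
  have norm_sq: "(norm z)\<^sup>2 = Re (cinner z z)" for z by (simp add: cinner_self)
  have S_scaleR: "r *\<^sub>R a \<in> S" if "a \<in> S" for a r
    using S_scale[OF that] by (simp add: scaleR_eq_scale)
  have orth_re: "Re (cinner w (M *v v)) = 0" if w: "w \<in> S" "cinner v w = 0" for w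
  proof (rule linear_coeff_zero_if_quadratic_nonpos)
    fix t :: real
    have wv: "cinner w v = 0" using w cinner_commute[of w v] by simp
    have sym: "Re (cinner v (M *v w)) = Re (cinner w (M *v v))"
      using cinner_hermitian[OF herm, of v w] cinner_commute[of "M *v v" w] by simp
    have "Re (cinner (v + t *\<^sub>R w) (M *v (v + t *\<^sub>R w))) \<le> lam * (norm (v + t *\<^sub>R w))\<^sup>2"
      using max S_add S_scaleR vS w(1) unfolding lam_def by blast
    then have "lam + t * Re (cinner v (M *v w)) + t * Re (cinner w (M *v v))
        + t\<^sup>2 * Re (cinner w (M *v w)) \<le> lam * (1 + t\<^sup>2 * Re (cinner w w))"
      unfolding norm_sq
      by (simp add: cinner_add_left cinner_add_right matrix_vector_right_distrib
          matrix_vector_mult_scaleR_complex cinner_scaleR_left cinner_scaleR_right vv wv w(2)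
          lam_def power2_eq_square algebra_simps)
    then show "Re (cinner w (M *v v)) * t
        + ((Re (cinner w (M *v w)) - lam * Re (cinner w w)) / 2) * t\<^sup>2 \<le> 0"
      using sym by (simp add: algebra_simps divide_simps)
  qed
  have "Re (cinner (\<i> *s w) (M *v v)) = 0"
    using orth_re[of "\<i> *s w"] w S_scale by (simp add: cinner_scale_right)
  then show ?thesis using orth_re[OF w] by (simp add: cinner_scale_left complex_eq_iff)
qed

lemma rayleigh_maximiser_eigenvector:
  assumes S_invariant: "\<And>x. x \<in> S \<Longrightarrow> M *v x \<in> S"
  shows "\<exists>l. M *v v = of_real l *s v"
proof -
  define c where "c = cinner v (M *v v)"
  define z where "z = M *v v - c *s v"
  have "M *v v + (- c) *s v \<in> S" using S_add[OF S_invariant[OF vS] S_scale[OF vS]] .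
  moreover have "M *v v + (- c) *s v = z" by (simp add: z_def vec_eq_iff)
  ultimately have zS: "z \<in> S" by metis
  have vz: "cinner v z = 0" by (simp add: z_def cinner_diff_right cinner_scale_right vv c_def)
  then have "cinner z v = 0" using cinner_commute[of z v] by simp
  then have "cinner z z = 0"
    using rayleigh_maximiser_orthogonal[OF zS vz]
    by (simp add: z_def cinner_diff_right cinner_scale_right)
  then have Mv: "M *v v = c *s v" by (simp add: z_def cinner_self_eq_0_iff)
  have "cnj c = c"
    using cinner_hermitian[OF herm, of v v] cinner_commute[of "M *v v" v] by (simp add: c_def)
  then have "c = of_real (Re c)" by (simp add: complex_eq_iff)
  then show ?thesis using Mv by metis
qed

end

lemma rayleigh_maximiser_exists:
  fixes M :: "complex^'n^'n"
  assumes "closed S" and S_scaleR: "\<And>a r. a \<in> S \<Longrightarrow> r *\<^sub>R a \<in> S"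
    and "x \<in> S" "x \<noteq> 0"
  shows "\<exists>v\<in>S. cinner v v = 1 \<and>
    (\<forall>y\<in>S. Re (cinner y (M *v y)) \<le> Re (cinner v (M *v v)) * (norm y)\<^sup>2)"
proof -
  define K where "K = sphere 0 1 \<inter> S"
  have K_compact: "compact K"
    unfolding K_def using assms(1) by (intro compact_Int_closed compact_sphere)
  have "(1 / norm x) *\<^sub>R x \<in> K" using assms(3,4) by (auto simp: K_def S_scaleR)
  then have K_nonempty: "K \<noteq> {}" by blast
  have "continuous_on K (\<lambda>x. Re (cinner x (M *v x)))"
    by (intro continuous_intros)
  then obtain v where v: "v \<in> K"
    and vmax: "\<And>y. y \<in> K \<Longrightarrow> Re (cinner y (M *v y)) \<le> Re (cinner v (M *v v))"
    using continuous_attains_sup[OF K_compact K_nonempty] by blast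
  have "Re (cinner y (M *v y)) \<le> Re (cinner v (M *v v)) * (norm y)\<^sup>2" if "y \<in> S" for y
  proof (cases "y = 0")
    case False
    define r where "r = 1 / norm y"
    have "r *\<^sub>R y \<in> K" using False that by (auto simp: K_def S_scaleR r_def)
    then have "Re (cinner (r *\<^sub>R y) (M *v (r *\<^sub>R y))) \<le> Re (cinner v (M *v v))"
      by (rule vmax)
    then have "r\<^sup>2 * Re (cinner y (M *v y)) \<le> Re (cinner v (M *v v))"
      by (simp add: cinner_scaleR_left cinner_scaleR_right
          matrix_vector_mult_scaleR_complex power2_eq_square mult.assoc)
    then show ?thesis using False by (simp add: r_def field_simps)
  qed (simp add: cinner_def)
  moreover have "v \<in> S" "cinner v v = 1" using v by (auto simp: K_def cinner_self)
  ultimately show ?thesis by blast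
qed

lemma hermitian_eigenvector_orthogonal:
  fixes M :: "complex^'n^'n" and u :: "'n \<Rightarrow> complex^'n"
  assumes herm: "hermitian M" and j: "j \<notin> I"
    and eig: "\<forall>i\<in>I. M *v u i = of_real (l i) *s u i"
  shows "\<exists>v l0. cinner v v = 1 \<and> (\<forall>i\<in>I. cinner (u i) v = 0) \<and> M *v v = of_real l0 *s v"
proof -
  define S where "S = {x. \<forall>i\<in>I. cinner (u i) x = 0}"
  have S_add: "a + b \<in> S" if "a \<in> S" "b \<in> S" for a b
    using that by (simp add: S_def cinner_add_right)
  have S_scale: "c *s a \<in> S" if "a \<in> S" for a c
    using that by (simp add: S_def cinner_scale_right)
  have S_scaleR: "r *\<^sub>R a \<in> S" if "a \<in> S" for a r
    using S_scale[OF that, of "of_real r"] by (simp only: scaleR_eq_scale)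
  have "cinner (u i) (M *v x) = 0" if "x \<in> S" "i \<in> I" for x i
    using that eig cinner_hermitian[OF herm, of "u i" x] by (simp add: S_def cinner_scale_left)
  then have S_invariant: "M *v x \<in> S" if "x \<in> S" for x
    using that by (simp add: S_def)
  have "S = (\<Inter>i\<in>I. {x. cinner (u i) x = 0})" by (auto simp: S_def)
  moreover have "closed {x. cinner (u i) x = 0}" for i
    by (intro closed_Collect_eq continuous_intros)
  ultimately have "closed S" by auto
  moreover obtain x where "x \<in> S" "x \<noteq> 0"
    using exists_nonzero_orthogonal[OF j, of u] by (auto simp: S_def)
  ultimately obtain v where vS: "v \<in> S" and vv: "cinner v v = 1"
    and max: "\<forall>y\<in>S. Re (cinner y (M *v y)) \<le> Re (cinner v (M *v v)) * (norm y)\<^sup>2"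
    using rayleigh_maximiser_exists[of S, OF _ S_scaleR] by metis
  then obtain l0 where "M *v v = of_real l0 *s v"
    using rayleigh_maximiser_eigenvector[OF herm S_add S_scale vS vv _ S_invariant] by blast
  then show ?thesis using vS vv by (auto simp: S_def)
qed

lemma hermitian_orthonormal_eigenvectors:
  fixes M :: "complex^'n^'n" and I :: "'n set"
  assumes herm: "hermitian M"
  shows "finite I \<Longrightarrow> \<exists>u l. (\<forall>i\<in>I. \<forall>j\<in>I. cinner (u i) (u j) = (if i = j then 1 else 0))
     \<and> (\<forall>i\<in>I. M *v u i = of_real (l i) *s u i)"
proof (induction I rule: finite_induct)
  case (insert j I)
  then obtain u l where o: "\<forall>i\<in>I. \<forall>k\<in>I. cinner (u i) (u k) = (if i = k then 1 else 0)"
    and e: "\<forall>i\<in>I. M *v u i = of_real (l i) *s u i" by blast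
  obtain v l0 where v: "cinner v v = 1" "\<forall>i\<in>I. cinner (u i) v = 0" "M *v v = of_real l0 *s v"
    using hermitian_eigenvector_orthogonal[OF herm insert(2) e] by blast
  have "\<forall>i\<in>I. cinner v (u i) = 0" using v(2) cinner_commute[of v] by simp
  then have "\<forall>i\<in>insert j I. \<forall>k\<in>insert j I.
      cinner ((u(j := v)) i) ((u(j := v)) k) = (if i = k then 1 else 0)"
    using o v insert(2) by auto
  moreover have "\<forall>i\<in>insert j I. M *v (u(j := v)) i = of_real ((l(j := l0)) i) *s (u(j := v)) i"
    using e v insert(2) by auto
  ultimately show ?case by blast
qed simp

theorem hermitian_spectral_decomposition:
  fixes M :: "complex^'n^'n"
  assumes "hermitian M"
  shows "\<exists>U d. unitary U \<and> M = U ** rdiag d ** adjoint U"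
proof -
  obtain u :: "'n \<Rightarrow> complex^'n" and l :: "'n \<Rightarrow> real"
    where o: "\<forall>i j. cinner (u i) (u j) = (if i = j then 1 else 0)"
      and e: "\<forall>i. M *v u i = of_real (l i) *s u i"
    using hermitian_orthonormal_eigenvectors[OF assms, of UNIV] by auto
  define U :: "complex^'n^'n" where "U = (\<chi> r c. u c $ r)"
  have UU: "adjoint U ** U = mat 1"
    using o by (simp add: vec_eq_iff U_def matrix_matrix_mult_def cinner_def mat_def)
  then have UU': "U ** adjoint U = mat 1" using matrix_left_right_inverse by blast
  have "(M ** U) $ r $ c = (M *v u c) $ r" for r c
    by (simp add: U_def matrix_matrix_mult_def matrix_vector_mult_def)
  moreover have "(U ** rdiag l) $ r $ c = u c $ r * of_real (l c)" for r c
    by (simp add: U_def matrix_matrix_mult_def rdiag_def if_distrib cong: if_cong)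
  ultimately have MU: "M ** U = U ** rdiag l" using e by (simp add: vec_eq_iff mult.commute)
  have "M = M ** (U ** adjoint U)" by (simp add: UU')
  also have "\<dots> = U ** rdiag l ** adjoint U" by (simp add: matrix_mul_assoc MU)
  finally show ?thesis using UU UU' unfolding unitary_def by blast
qed

section \<open>Functional calculus\<close>

lemma rdiag_matrix_mult_nth: "(rdiag d ** A) $ i $ j = of_real (d i) * A $ i $ j"
  unfolding rdiag_def matrix_matrix_mult_def
  by (simp add: sum.cong[OF refl, of _ _ "\<lambda>k. if k = i then of_real (d i) * A $ i $ j else 0"])

lemma matrix_rdiag_mult_nth: "(A ** rdiag d) $ i $ j = A $ i $ j * of_real (d j)"
  unfolding rdiag_def matrix_matrix_mult_def
  by (simp add: sum.cong[OF refl, of _ _ "\<lambda>k. if k = j then A $ i $ j * of_real (d j) else 0"])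

lemma adjoint_rdiag [simp]: "adjoint (rdiag d) = rdiag d"
  by (simp add: vec_eq_iff rdiag_def)

lemma rdiag_mult: "rdiag a ** rdiag b = rdiag (\<lambda>i. a i * b i)"
  by (simp add: vec_eq_iff rdiag_matrix_mult_nth) (simp add: rdiag_def)

text \<open>A intertwines diag(d) with diag(d') only through entries where d' i = d j, and those
  entries also intertwine diag(f \<circ> d) with diag(f \<circ> d').\<close>

lemma rdiag_intertwine:
  assumes "rdiag d' ** A = A ** rdiag d"
  shows "rdiag (f \<circ> d') ** A = A ** rdiag (f \<circ> d)"
proof -
  have "of_real (d' i) * A $ i $ j = A $ i $ j * of_real (d j)" for i j
    using assms by (metis rdiag_matrix_mult_nth matrix_rdiag_mult_nth)
  then have "A $ i $ j = 0 \<or> d' i = d j" for i j by (simp add: mult.commute)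
  then have "of_real (f (d' i)) * A $ i $ j = A $ i $ j * of_real (f (d j))" for i j
    by (metis mult.commute mult_zero_left mult_zero_right)
  then show ?thesis by (simp add: vec_eq_iff rdiag_matrix_mult_nth matrix_rdiag_mult_nth)
qed

lemma spectral_fun_intertwine:
  assumes U: "unitary U" and U': "unitary U'"
    and Y: "Y = U' ** rdiag d' ** adjoint U'" and X: "X = U ** rdiag d ** adjoint U"
    and YT: "Y ** T = T ** X"
  shows "(U' ** rdiag (f \<circ> d') ** adjoint U') ** T = T ** (U ** rdiag (f \<circ> d) ** adjoint U)"
proof -
  define A where "A = adjoint U' ** T ** U"
  have Y_U': "adjoint U' ** Y = rdiag d' ** adjoint U'"
    using U' unfolding Y by (simp add: unitary_def matrix_mul_assoc)
  have X_U: "X ** U = U ** rdiag d"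
    using U unfolding X by (simp add: unitary_def flip: matrix_mul_assoc)
  have "rdiag d' ** A = adjoint U' ** Y ** T ** U"
    by (simp add: A_def Y_U' matrix_mul_assoc)
  also have "\<dots> = adjoint U' ** T ** X ** U" by (simp add: YT flip: matrix_mul_assoc)
  also have "\<dots> = A ** rdiag d" by (simp add: A_def X_U flip: matrix_mul_assoc)
  finally have "rdiag (f \<circ> d') ** A = A ** rdiag (f \<circ> d)" by (rule rdiag_intertwine)
  then have "U' ** (rdiag (f \<circ> d') ** A) ** adjoint U = U' ** (A ** rdiag (f \<circ> d)) ** adjoint U"
    by simp
  moreover have "U' ** (rdiag (f \<circ> d') ** A) ** adjoint U = (U' ** rdiag (f \<circ> d') ** adjoint U') ** T"
  proof -
    have "U' ** (rdiag (f \<circ> d') ** A) ** adjoint U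
        = U' ** rdiag (f \<circ> d') ** adjoint U' ** T ** (U ** adjoint U)"
      by (simp add: A_def matrix_mul_assoc)
    then show ?thesis using U by (simp add: unitary_def)
  qed
  moreover have "U' ** (A ** rdiag (f \<circ> d)) ** adjoint U = T ** (U ** rdiag (f \<circ> d) ** adjoint U)"
  proof -
    have "U' ** (A ** rdiag (f \<circ> d)) ** adjoint U
        = (U' ** adjoint U') ** T ** U ** rdiag (f \<circ> d) ** adjoint U"
      by (simp add: A_def matrix_mul_assoc)
    then show ?thesis using U' by (simp add: unitary_def matrix_mul_assoc)
  qed
  ultimately show ?thesis by simp
qed

text \<open>In particular \<^const>\<open>mat_fun\<close> does not depend on the decomposition chosen by \<open>SOME\<close>.\<close>

lemma mat_fun_spectral:
  assumes U: "unitary U" and M: "M = U ** rdiag d ** adjoint U"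
  shows "mat_fun f M = U ** rdiag (f \<circ> d) ** adjoint U"
proof -
  have "\<exists>N U d. unitary U \<and> M = U ** rdiag d ** adjoint U \<and> N = U ** rdiag (f \<circ> d) ** adjoint U"
    using U M by blast
  from someI_ex[OF this] obtain U' d' where U': "unitary U'" "M = U' ** rdiag d' ** adjoint U'"
    and N: "mat_fun f M = U' ** rdiag (f \<circ> d') ** adjoint U'"
    unfolding mat_fun_def by blast
  have "(U' ** rdiag (f \<circ> d') ** adjoint U') ** mat 1 = mat 1 ** (U ** rdiag (f \<circ> d) ** adjoint U)"
    by (rule spectral_fun_intertwine[OF U U'(1) U'(2) M]) simp
  then show ?thesis using N by simp
qed

lemma mat_fun_intertwine:
  assumes "hermitian Y" "hermitian X" "Y ** T = T ** X"
  shows "mat_fun f Y ** T = T ** mat_fun f X"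
proof -
  obtain U d where U: "unitary U" "X = U ** rdiag d ** adjoint U"
    using hermitian_spectral_decomposition[OF assms(2)] by blast
  obtain U' d' where U': "unitary U'" "Y = U' ** rdiag d' ** adjoint U'"
    using hermitian_spectral_decomposition[OF assms(1)] by blast
  show ?thesis
    using spectral_fun_intertwine[OF U(1) U'(1) U'(2) U(2) assms(3)]
    by (simp add: mat_fun_spectral[OF U] mat_fun_spectral[OF U'])
qed

lemma trace_mat_fun_gram_swap:
  "trace (C ** adjoint C ** mat_fun f (C ** adjoint C))
     = trace (adjoint C ** C ** mat_fun f (adjoint C ** C))"
proof -
  have "mat_fun f (C ** adjoint C) ** C = C ** mat_fun f (adjoint C ** C)"
    by (rule mat_fun_intertwine[OF hermitian_gram hermitian_gram']) (simp add: matrix_mul_assoc)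
  then have "trace (C ** (adjoint C ** mat_fun f (C ** adjoint C)))
      = trace (adjoint C ** C ** mat_fun f (adjoint C ** C))"
    by (subst trace_mul_sym) (metis matrix_mul_assoc)
  then show ?thesis by (simp add: matrix_mul_assoc)
qed

lemma psd_spectral_decomposition:
  assumes "psd M"
  shows "\<exists>U d. unitary U \<and> M = U ** rdiag d ** adjoint U \<and> (\<forall>i. d i \<ge> 0)"
proof -
  obtain U d where U: "unitary U" "M = U ** rdiag d ** adjoint U"
    using hermitian_spectral_decomposition assms psd_def by blast
  have "d i \<ge> 0" for i
  proof -
    define v where "v = (\<chi> k. U $ k $ i)"
    have "adjoint U ** M ** U = (adjoint U ** U) ** rdiag d ** (adjoint U ** U)"
      using U by (simp add: matrix_mul_assoc)
    then have "(adjoint U ** M ** U) $ i $ i = of_real (d i)"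
      using U by (simp add: unitary_def rdiag_def)
    moreover have "(M ** U) $ k $ i = (M *v v) $ k" for k
      by (simp add: v_def matrix_matrix_mult_def matrix_vector_mult_def)
    then have "(adjoint U ** (M ** U)) $ i $ i = cinner v (M *v v)"
      by (simp add: v_def cinner_def matrix_matrix_mult_def)
    then have "(adjoint U ** M ** U) $ i $ i = cinner v (M *v v)"
      by (simp add: matrix_mul_assoc)
    ultimately have "cinner v (M *v v) = of_real (d i)" by simp
    then show ?thesis using assms unfolding psd_def by (metis Re_complex_of_real)
  qed
  then show ?thesis using U by blast
qed

lemma adjoint_msqrt_mult_msqrt:
  assumes "psd M"
  shows "adjoint (msqrt M) ** msqrt M = M"
proof -
  obtain U d where U: "unitary U" "M = U ** rdiag d ** adjoint U" and d: "\<forall>i. d i \<ge> 0"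
    using psd_spectral_decomposition[OF assms] by blast
  have "adjoint (msqrt M) ** msqrt M
      = U ** (rdiag (sqrt \<circ> d) ** (adjoint U ** U) ** rdiag (sqrt \<circ> d)) ** adjoint U"
    unfolding msqrt_def mat_fun_spectral[OF U] by (simp add: adjoint_mult matrix_mul_assoc)
  also have "\<dots> = U ** rdiag d ** adjoint U"
    using U(1) d by (simp add: unitary_def rdiag_mult)
  finally show ?thesis using U by simp
qed

lemma psd_eq_gram:
  fixes M :: "complex^'n^'n"
  assumes "psd M"
  obtains R :: "complex^'n^'n" where "M = R ** adjoint R"
proof -
  obtain U d where U: "unitary U" "M = U ** rdiag d ** adjoint U" and d: "\<forall>i. d i \<ge> 0"
    using psd_spectral_decomposition[OF assms] by blast
  define R where "R = U ** rdiag (sqrt \<circ> d)"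
  have sqrt_sq: "(\<lambda>i. (sqrt \<circ> d) i * (sqrt \<circ> d) i) = d" using d by auto
  have "R ** adjoint R = U ** (rdiag (sqrt \<circ> d) ** rdiag (sqrt \<circ> d)) ** adjoint U"
    by (simp add: R_def adjoint_mult matrix_mul_assoc)
  also have "\<dots> = M" by (simp only: rdiag_mult sqrt_sq U(2))
  finally show thesis by (intro that) (rule sym)
qed

lemma psd_sum: "(\<And>x. x \<in> S \<Longrightarrow> psd (f x)) \<Longrightarrow> psd (sum f S)"
proof (induction S rule: infinite_finite_induct)
  case (insert x S)
  then show ?case
    by (simp add: psd_def hermitian_def adjoint_add matrix_vector_mult_add_rdistrib cinner_add_right)
qed (simp_all add: psd_def hermitian_def vec_eq_iff cinner_def)

section \<open>Pinching and the relative entropy of a Gram operator\<close>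

lemma projR_nth: "projR j $ a $ b = (if fst a = j \<and> fst b = j \<and> snd a = snd b then 1 else 0)"
  by (simp add: projR_def kron_def mat_def)

lemma projR_matrix_mult_nth: "(projR j ** A) $ a $ b = (if fst a = j then A $ a $ b else 0)"
proof -
  have "projR j $ a $ c * A $ c $ b = (if c = a then (if fst a = j then A $ a $ b else 0) else 0)" for c
    by (cases a; cases c) (auto simp: projR_nth)
  then show ?thesis by (simp add: matrix_matrix_mult_def)
qed

lemma matrix_projR_mult_nth: "(A ** projR j) $ a $ b = (if fst b = j then A $ a $ b else 0)"
proof -
  have "A $ a $ c * projR j $ c $ b = (if c = b then (if fst b = j then A $ a $ b else 0) else 0)" for c
    by (cases b; cases c) (auto simp: projR_nth)
  then show ?thesis by (simp add: matrix_matrix_mult_def)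
qed

lemma sum_projR: "(\<Sum>j\<in>UNIV. projR j) = (mat 1 :: complex^('r::finite \<times> 'x::finite)^('r \<times> 'x))"
proof -
  have "(\<Sum>j\<in>UNIV. projR j) $ a $ b = (mat 1 :: complex^('r \<times> 'x)^('r \<times> 'x)) $ a $ b" for a b
  proof -
    have "(\<Sum>j\<in>UNIV. projR j) $ a $ b = (\<Sum>j\<in>UNIV. projR j $ a $ b)"
      by (simp add: sum_component)
    also have "\<dots> = (\<Sum>j\<in>UNIV. if j = fst a then
        (if fst b = fst a \<and> snd a = snd b then (1::complex) else 0) else 0)"
      by (rule sum.cong) (auto simp: projR_nth)
    finally show ?thesis by (cases a; cases b) (auto simp: mat_def)
  qed
  then show ?thesis by (simp add: vec_eq_iff)
qed

lemma pinch_nth: "pinch Y $ a $ b = (if fst a = fst b then Y $ a $ b else 0)"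
  by (simp add: pinch_def sum_component projR_matrix_mult_nth matrix_projR_mult_nth)

lemma pinch_commute_projR: "pinch Y ** projR j = projR j ** pinch Y"
  by (simp add: vec_eq_iff projR_matrix_mult_nth matrix_projR_mult_nth pinch_nth)

lemma hermitian_pinch: "hermitian Y \<Longrightarrow> hermitian (pinch Y)"
  by (simp add: hermitian_def vec_eq_iff pinch_nth)

lemma commute_projR_off_block_zero:
  assumes "\<And>j. L ** projR j = projR j ** L" and "fst a \<noteq> fst b"
  shows "L $ a $ b = 0"
proof -
  have "(L ** projR (fst b)) $ a $ b = (projR (fst b) ** L) $ a $ b" using assms(1) by simp
  then show ?thesis using assms(2) by (simp add: projR_matrix_mult_nth matrix_projR_mult_nth)
qed

lemma trace_pinch_mult:
  assumes "\<And>j. L ** projR j = projR j ** L"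
  shows "trace (pinch Y ** L) = trace (Y ** L)"
proof -
  have "pinch Y $ a $ b * L $ b $ a = Y $ a $ b * L $ b $ a" for a b
    using commute_projR_off_block_zero[OF assms, of b a] by (auto simp: pinch_nth)
  then show ?thesis unfolding trace_def matrix_matrix_mult_def by (simp only: vec_lambda_beta)
qed

definition block_split :: "complex^'x::finite^('r::finite \<times> 'p::finite) \<Rightarrow> complex^('r \<times> 'x)^('r \<times> 'p)" where
  "block_split C = (\<chi> i. \<chi> jx. if fst i = fst jx then C $ i $ snd jx else 0)"

lemma pinch_gram_eq_block_split_gram:
  "pinch (C ** adjoint C) = block_split C ** adjoint (block_split C)"
proof -
  have "(block_split C ** adjoint (block_split C)) $ a $ b
      = (if fst a = fst b then (C ** adjoint C) $ a $ b else 0)" for a b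
  proof -
    have inner: "(\<Sum>x\<in>UNIV. block_split C $ a $ (j, x) * adjoint (block_split C) $ (j, x) $ b)
        = (if j = fst a then (if fst a = fst b then (C ** adjoint C) $ a $ b else 0) else 0)" for j
      by (simp add: block_split_def matrix_matrix_mult_def)
    have "(block_split C ** adjoint (block_split C)) $ a $ b
       = (\<Sum>j\<in>UNIV. \<Sum>x\<in>UNIV. block_split C $ a $ (j, x) * adjoint (block_split C) $ (j, x) $ b)"
      unfolding matrix_matrix_mult_def by (simp only: vec_lambda_beta sum_UNIV_prod)
    also have "\<dots> = (if fst a = fst b then (C ** adjoint C) $ a $ b else 0)"
      by (simp only: inner sum.delta finite UNIV_I if_True)
    finally show ?thesis .
  qed
  then show ?thesis by (simp add: vec_eq_iff pinch_nth)
qed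

lemma block_split_gram_nth:
  "(adjoint (block_split C) ** block_split C) $ (j, x) $ (j', x')
     = (if j = j' then (adjoint C ** projR j ** C) $ x $ x' else 0)"
proof -
  have "(adjoint C ** projR j ** C) $ x $ x' = (adjoint C ** (projR j ** C)) $ x $ x'"
    by (simp add: matrix_mul_assoc)
  also have "\<dots> = (\<Sum>i\<in>UNIV. if fst i = j then cnj (C $ i $ x) * C $ i $ x' else 0)"
    unfolding matrix_matrix_mult_def[of "adjoint C"]
    by (simp add: projR_matrix_mult_nth if_distrib cong: if_cong)
  finally have proj: "(adjoint C ** projR j ** C) $ x $ x' = \<dots>" .
  have "(adjoint (block_split C) ** block_split C) $ (j, x) $ (j', x') =
     (\<Sum>i\<in>UNIV. cnj (if fst i = j then C $ i $ x else 0) * (if fst i = j' then C $ i $ x' else 0))"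
    unfolding matrix_matrix_mult_def block_split_def
    by (simp only: vec_lambda_beta adjoint_nth fst_conv snd_conv)
  then show ?thesis unfolding proj by (auto intro!: sum.cong sum.neutral)
qed

lemma adjoint_mult_vec_sum_blocks:
  "(adjoint C *v v) $ x = (\<Sum>j\<in>UNIV. (adjoint (block_split C) *v v) $ (j, x))"
proof -
  have "(adjoint (block_split C) *v v) $ (j, x) = (\<Sum>p\<in>UNIV. cnj (C $ (j, p) $ x) * v $ (j, p))" for j
  proof -
    have "(adjoint (block_split C) *v v) $ (j, x)
        = (\<Sum>r\<in>UNIV. \<Sum>p\<in>UNIV. adjoint (block_split C) $ (j, x) $ (r, p) * v $ (r, p))"
      unfolding matrix_vector_mult_def by (simp only: vec_lambda_beta sum_UNIV_prod)
    also have "\<dots> = (\<Sum>r\<in>UNIV. if r = j then (\<Sum>p\<in>UNIV. cnj (C $ (j, p) $ x) * v $ (j, p)) else 0)"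
      by (rule sum.cong[OF refl]) (simp add: block_split_def)
    finally show ?thesis by simp
  qed
  then show ?thesis by (simp add: matrix_vector_mult_def sum_UNIV_prod)
qed

text \<open>This is the support condition in \<^const>\<open>rel_entropy\<close>: it always holds for the pinching.\<close>

lemma ker_pinch_gram_subset:
  assumes "pinch (C ** adjoint C) *v v = 0"
  shows "(C ** adjoint C) *v v = 0"
proof -
  let ?D = "block_split C"
  have "cinner (adjoint ?D *v v) (adjoint ?D *v v) = 0"
    using assms cinner_gram[of v ?D] by (simp add: pinch_gram_eq_block_split_gram)
  then have "adjoint ?D *v v = 0" by (simp add: cinner_self_eq_0_iff)
  then have "adjoint C *v v = 0" by (simp add: vec_eq_iff adjoint_mult_vec_sum_blocks[of C])
  then show ?thesis by (simp add: matrix_vector_mul_assoc[symmetric])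
qed

lemma rel_entropy_pinch_gram:
  fixes C :: "complex^'x::finite^('r::finite \<times> 'p::finite)"
  shows "rel_entropy (C ** adjoint C) (pinch (C ** adjoint C))
    = ereal (Re (trace (adjoint C ** C ** mlog2 (adjoint C ** C))
       - trace (adjoint (block_split C) ** block_split C
                ** mlog2 (adjoint (block_split C) ** block_split C))))"
proof -
  let ?Y = "C ** adjoint C" and ?D = "block_split C"
  have "mlog2 (pinch ?Y) ** projR j = projR j ** mlog2 (pinch ?Y)" for j
    unfolding mlog2_def
    by (rule mat_fun_intertwine[OF hermitian_pinch hermitian_pinch pinch_commute_projR])
      (rule hermitian_gram)+
  then have "trace (?Y ** mlog2 (pinch ?Y)) = trace (pinch ?Y ** mlog2 (pinch ?Y))"
    by (rule trace_pinch_mult[symmetric])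
  also have "\<dots> = trace (adjoint ?D ** ?D ** mlog2 (adjoint ?D ** ?D))"
    unfolding pinch_gram_eq_block_split_gram mlog2_def by (rule trace_mat_fun_gram_swap)
  finally have "trace (?Y ** mlog2 (pinch ?Y)) = trace (adjoint ?D ** ?D ** mlog2 (adjoint ?D ** ?D))" .
  moreover have "trace (?Y ** mlog2 ?Y) = trace (adjoint C ** C ** mlog2 (adjoint C ** C))"
    unfolding mlog2_def by (rule trace_mat_fun_gram_swap)
  ultimately show ?thesis unfolding rel_entropy_def using ker_pinch_gram_subset by auto
qed

definition hstack :: "('s::finite \<Rightarrow> complex^'h::finite^'o::finite) \<Rightarrow> complex^('h \<times> 's)^'o" where
  "hstack M = (\<chi> i. \<chi> hs. M (snd hs) $ i $ fst hs)"

lemma hstack_gram: "hstack M ** adjoint (hstack M) = (\<Sum>s\<in>UNIV. M s ** adjoint (M s))"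
proof -
  have "(hstack M ** adjoint (hstack M)) $ i $ i' = (\<Sum>s\<in>UNIV. M s ** adjoint (M s)) $ i $ i'" for i i'
  proof -
    have "(hstack M ** adjoint (hstack M)) $ i $ i'
        = (\<Sum>h\<in>UNIV. \<Sum>s\<in>UNIV. M s $ i $ h * cnj (M s $ i' $ h))"
      by (simp add: matrix_matrix_mult_def hstack_def sum_UNIV_prod)
    also have "\<dots> = (\<Sum>s\<in>UNIV. \<Sum>h\<in>UNIV. M s $ i $ h * cnj (M s $ i' $ h))"
      by (rule sum.swap)
    finally show ?thesis by (simp add: matrix_matrix_mult_def sum_component)
  qed
  then show ?thesis by (simp add: vec_eq_iff)
qed

lemma adjoint_hstack_sandwich_nth:
  "(adjoint (hstack M) ** Q ** hstack M) $ x $ x' = (adjoint (M (snd x)) ** Q ** M (snd x')) $ fst x $ fst x'"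
  by (simp add: matrix_matrix_mult_def hstack_def)

lemma sum_projR_sandwich: "(\<Sum>j\<in>UNIV. X ** projR j ** Y) = X ** Y"
  by (simp add: sum_projR flip: matrix_mul_sum_left matrix_mul_sum_right)

lemma rel_entropy_pinch_hstack_eq:
  assumes "\<And>s s' j. adjoint (M s) ** projR j ** M s' = adjoint (M' s) ** projR j ** M' s'"
  shows "rel_entropy (hstack M ** adjoint (hstack M)) (pinch (hstack M ** adjoint (hstack M)))
    = rel_entropy (hstack M' ** adjoint (hstack M')) (pinch (hstack M' ** adjoint (hstack M')))"
proof -
  have "adjoint (M s) ** M s' = adjoint (M' s) ** M' s'" for s s'
    using sum_projR_sandwich[of "adjoint (M s)" "M s'"] sum_projR_sandwich[of "adjoint (M' s)" "M' s'"]
    by (simp only: assms)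
  then have "(adjoint (hstack M) ** mat 1 ** hstack M) $ x $ x'
      = (adjoint (hstack M') ** mat 1 ** hstack M') $ x $ x'" for x x'
    unfolding adjoint_hstack_sandwich_nth by simp
  then have "adjoint (hstack M) ** hstack M = adjoint (hstack M') ** hstack M'"
    by (simp add: vec_eq_iff)
  moreover have "(adjoint (block_split (hstack M)) ** block_split (hstack M)) $ (j, x) $ (j', x')
      = (adjoint (block_split (hstack M')) ** block_split (hstack M')) $ (j, x) $ (j', x')"
    for j x j' x'
    unfolding block_split_gram_nth adjoint_hstack_sandwich_nth by (simp add: assms)
  then have "adjoint (block_split (hstack M)) ** block_split (hstack M)
      = adjoint (block_split (hstack M')) ** block_split (hstack M')"
    by (simp add: vec_eq_iff)
  ultimately show ?thesis unfolding rel_entropy_pinch_gram by simp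
qed

section \<open>The postprocessing maps\<close>

lemma kron_nth: "kron A B $ i $ j = A $ fst i $ fst j * B $ snd i $ snd j"
  by (simp add: kron_def)

lemma Kraus_nth:
  "Kraus P f a $ e $ h = (if snd (fst e) = a then msqrt (P (f a (snd e))) $ fst (fst e) $ h else 0)"
  by (simp add: Kraus_def op_ket_def sum_component if_distrib cong: if_cong)

lemma Kraus'_nth:
  "Kraus' P f a $ e $ h = (if snd e = a then msqrt (\<Sum>\<alpha>\<in>UNIV. P (f a \<alpha>)) $ fst e $ h else 0)"
  by (simp add: Kraus'_def op_ket_def)

lemma adjoint_Kraus_mult_Kraus:
  assumes "\<forall>x. psd (P x)"
  shows "adjoint (Kraus P f a) ** Kraus P f a' = (if a = a' then (\<Sum>\<alpha>\<in>UNIV. P (f a \<alpha>)) else 0)"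
proof -
  let ?X = "\<lambda>w. msqrt (P (f a w))"
  have "(adjoint (Kraus P f a) ** Kraus P f a') $ h $ h'
      = (if a = a' then (\<Sum>\<alpha>\<in>UNIV. P (f a \<alpha>)) else 0) $ h $ h'" for h h'
  proof -
    have "(adjoint (Kraus P f a) ** Kraus P f a') $ h $ h'
       = (\<Sum>k\<in>UNIV. \<Sum>s\<in>UNIV. \<Sum>w\<in>UNIV. cnj (Kraus P f a $ ((k, s), w) $ h) * Kraus P f a' $ ((k, s), w) $ h')"
      unfolding matrix_matrix_mult_def by (simp only: vec_lambda_beta adjoint_nth sum_UNIV_prod)
    also have "\<dots> = (\<Sum>k\<in>UNIV. \<Sum>s\<in>UNIV. if s = a then
        (if a = a' then (\<Sum>w\<in>UNIV. cnj (?X w $ k $ h) * ?X w $ k $ h') else 0) else 0)"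
      by (intro sum.cong refl) (auto simp: Kraus_nth)
    also have "\<dots> = (if a = a' then (\<Sum>k\<in>UNIV. \<Sum>w\<in>UNIV. cnj (?X w $ k $ h) * ?X w $ k $ h') else 0)"
      by simp
    also have "\<dots> = (if a = a' then (\<Sum>w\<in>UNIV. (adjoint (?X w) ** ?X w) $ h $ h') else 0)"
      by (simp add: matrix_matrix_mult_def) (intro impI sum.swap)
    also have "\<dots> = (if a = a' then (\<Sum>\<alpha>\<in>UNIV. P (f a \<alpha>)) else 0) $ h $ h'"
      using assms by (simp add: adjoint_msqrt_mult_msqrt sum_component)
    finally show ?thesis .
  qed
  then show ?thesis by (simp add: vec_eq_iff)
qed

lemma adjoint_Kraus'_mult_Kraus':
  assumes "\<forall>x. psd (P x)"
  shows "adjoint (Kraus' P f a) ** Kraus' P f a' = (if a = a' then (\<Sum>\<alpha>\<in>UNIV. P (f a \<alpha>)) else 0)"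
proof -
  let ?S = "\<Sum>\<alpha>\<in>UNIV. P (f a \<alpha>)"
  have "psd ?S" using assms by (intro psd_sum) auto
  have "(adjoint (Kraus' P f a) ** Kraus' P f a') $ h $ h' = (if a = a' then ?S else 0) $ h $ h'" for h h'
  proof -
    have "(adjoint (Kraus' P f a) ** Kraus' P f a') $ h $ h'
       = (\<Sum>k\<in>UNIV. \<Sum>s\<in>UNIV. cnj (Kraus' P f a $ (k, s) $ h) * Kraus' P f a' $ (k, s) $ h')"
      unfolding matrix_matrix_mult_def by (simp only: vec_lambda_beta adjoint_nth sum_UNIV_prod)
    also have "\<dots> = (\<Sum>k\<in>UNIV. \<Sum>s\<in>UNIV. if s = a then
        (if a = a' then cnj (msqrt ?S $ k $ h) * msqrt ?S $ k $ h' else 0) else 0)"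
      by (intro sum.cong refl) (auto simp: Kraus'_nth)
    also have "\<dots> = (if a = a' then (adjoint (msqrt ?S) ** msqrt ?S) $ h $ h' else 0)"
      by (simp add: matrix_matrix_mult_def)
    also have "\<dots> = (if a = a' then ?S else 0) $ h $ h'"
      using \<open>psd ?S\<close> by (cases "a = a'") (simp_all add: adjoint_msqrt_mult_msqrt)
    finally show ?thesis .
  qed
  then show ?thesis by (simp add: vec_eq_iff)
qed

definition cdiag :: "('e \<Rightarrow> complex) \<Rightarrow> complex^'e::finite^'e" where
  "cdiag q = (\<chi> e e'. if e = e' then q e else 0)"

lemma cdiag_mult: "cdiag p ** cdiag q = cdiag (\<lambda>e. p e * q e)"
proof -
  have "(cdiag p ** cdiag q) $ e $ e' = cdiag (\<lambda>e. p e * q e) $ e $ e'" for e e'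
  proof -
    have "(cdiag p ** cdiag q) $ e $ e'
        = (\<Sum>k\<in>UNIV. (if e = k then p e else 0) * (if k = e' then q k else 0))"
      unfolding matrix_matrix_mult_def cdiag_def by simp
    also have "\<dots> = (\<Sum>k\<in>UNIV. if k = e then (if e = e' then p e * q e else 0) else 0)"
      by (rule sum.cong) auto
    finally show ?thesis by (simp add: cdiag_def)
  qed
  then show ?thesis by (simp add: vec_eq_iff)
qed

lemma adjoint_cdiag_sandwich_nth:
  "(adjoint A ** cdiag q ** B) $ h $ h' = (\<Sum>e\<in>UNIV. cnj (A $ e $ h) * q e * B $ e $ h')"
proof -
  have "(cdiag q ** B) $ e $ h' = q e * B $ e $ h'" for e
    unfolding matrix_matrix_mult_def cdiag_def
    by (simp add: sum.cong[OF refl, of _ _ "\<lambda>k. if k = e then q e * B $ e $ h' else 0"])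
  then show ?thesis
    unfolding matrix_mul_assoc[symmetric] matrix_matrix_mult_def[of "adjoint A" "cdiag q ** B"]
    by (simp add: mult.assoc)
qed

lemma sift_proj_eq_cdiag:
  "sift_proj selA Ks = cdiag (\<lambda>e. if (selA (fst e), snd (fst (snd e))) \<in> Ks then 1 else 0)"
  by (simp add: vec_eq_iff sift_proj_def cdiag_def)

lemma adjoint_sift_proj: "adjoint (sift_proj selA Ks) = sift_proj selA Ks"
  by (simp add: vec_eq_iff sift_proj_def)

text \<open>The weight with which Bob's output index e, paired with Alice's announcement a, survives
  sifting and yields the key value j.\<close>

definition key_indicator :: "('sa \<times> 'sb) set \<Rightarrow> ('sa \<Rightarrow> 'sb \<Rightarrow> 'y \<Rightarrow> 'r) \<Rightarrow> ('sb \<Rightarrow> 'wb \<Rightarrow> 'y)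
    \<Rightarrow> 'r \<Rightarrow> 'sa \<Rightarrow> ('hb \<times> 'sb) \<times> 'wb \<Rightarrow> complex" where
  "key_indicator Ks g fB j a e =
     (if (a, snd (fst e)) \<in> Ks \<and> g a (snd (fst e)) (fB (snd (fst e)) (snd e)) = j then 1 else 0)"

lemma key_op_projR_sandwich:
  "adjoint (key_op selA Ks g fB) ** projR j ** key_op selA Ks g fB
   = cdiag (\<lambda>e. if (selA (fst e), snd (fst (snd e))) \<in> Ks \<and>
        g (selA (fst e)) (snd (fst (snd e))) (fB (snd (fst (snd e))) (snd (snd e))) = j then 1 else 0)"
    (is "_ = cdiag ?q")
proof -
  let ?V = "key_op selA Ks g fB"
  let ?kept = "\<lambda>e. (selA (fst e), snd (fst (snd e))) \<in> Ks"
  let ?key = "\<lambda>e. g (selA (fst e)) (snd (fst (snd e))) (fB (snd (fst (snd e))) (snd (snd e)))"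
  have V: "?V $ i $ e = (if snd i = e \<and> ?kept e \<and> fst i = ?key e then 1 else 0)" for i e
    by (auto simp: key_op_def)
  have "(adjoint ?V ** (projR j ** ?V)) $ e $ e' = cdiag ?q $ e $ e'" for e e'
  proof -
    have "adjoint ?V $ e $ i * (projR j ** ?V) $ i $ e'
       = (if i = (?key e, e) then (if ?kept e \<and> ?key e = j \<and> e = e' then 1 else 0) else 0)" for i
      by (cases i) (auto simp: projR_matrix_mult_nth V)
    then show ?thesis
      unfolding matrix_matrix_mult_def[of "adjoint ?V"] vec_lambda_beta by (simp add: cdiag_def)
  qed
  then show ?thesis by (simp add: vec_eq_iff matrix_mul_assoc)
qed

lemma sift_key_projR_sandwich:
  "sift_proj selA Ks ** (adjoint (key_op selA Ks g fB) ** projR j ** key_op selA Ks g fB) ** sift_proj selA Ks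
   = cdiag (\<lambda>e. key_indicator Ks g fB j (selA (fst e)) (snd e))"
  unfolding key_op_projR_sandwich sift_proj_eq_cdiag cdiag_mult
  by (rule arg_cong[where f = cdiag]) (auto simp: key_indicator_def)

text \<open>The support hypothesis says that K_a writes a into the register read by selA.\<close>

lemma kron_cdiag_sandwich_nth:
  fixes KA :: "'sa \<Rightarrow> complex^'ha::finite^'ea::finite" and KB :: "'sb \<Rightarrow> complex^'hb::finite^'eb::finite"
  assumes supp: "\<forall>a e. selA e \<noteq> a \<longrightarrow> KA a $ e = 0"
  shows "(adjoint (kron (KA a) (KB b)) ** cdiag (\<lambda>e. q (selA (fst e)) (snd e)) ** kron (KA a') (KB b')) $ h $ h'
    = (adjoint (KA a) ** KA a') $ fst h $ fst h' *
      (\<Sum>eB\<in>UNIV. cnj (KB b $ eB $ snd h) * q a eB * KB b' $ eB $ snd h')"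
proof -
  have factor: "cnj (kron (KA a) (KB b) $ (eA, eB) $ h) * q (selA eA) eB * kron (KA a') (KB b') $ (eA, eB) $ h'
     = (cnj (KA a $ eA $ fst h) * KA a' $ eA $ fst h') * (cnj (KB b $ eB $ snd h) * q a eB * KB b' $ eB $ snd h')"
    for eA eB
  proof (cases "selA eA = a")
    case False
    then show ?thesis using supp by (simp add: kron_nth)
  qed (simp add: kron_nth mult_ac)
  have "(adjoint (kron (KA a) (KB b)) ** cdiag (\<lambda>e. q (selA (fst e)) (snd e)) ** kron (KA a') (KB b')) $ h $ h'
     = (\<Sum>eA\<in>UNIV. \<Sum>eB\<in>UNIV. (cnj (KA a $ eA $ fst h) * KA a' $ eA $ fst h')
         * (cnj (KB b $ eB $ snd h) * q a eB * KB b' $ eB $ snd h'))"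
    unfolding adjoint_cdiag_sandwich_nth sum_UNIV_prod by (simp only: factor fst_conv snd_conv)
  also have "\<dots> = (adjoint (KA a) ** KA a') $ fst h $ fst h' *
      (\<Sum>eB\<in>UNIV. cnj (KB b $ eB $ snd h) * q a eB * KB b' $ eB $ snd h')"
    by (simp add: matrix_matrix_mult_def sum_product)
  finally show ?thesis .
qed

definition branch_op where
  "branch_op selA Ks g fB KA KB R s =
     key_op selA Ks g fB ** sift_proj selA Ks ** kron (KA (fst s)) (KB (snd s)) ** R"

lemma postprocess_eq_hstack_gram:
  "key_op selA Ks g fB ** sift_proj selA Ks ** announce KA KB (R ** adjoint R)
     ** sift_proj selA Ks ** adjoint (key_op selA Ks g fB)
   = hstack (branch_op selA Ks g fB KA KB R) ** adjoint (hstack (branch_op selA Ks g fB KA KB R))"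
  unfolding hstack_gram sum_UNIV_prod branch_op_def announce_def
  by (simp add: matrix_mul_sum_right matrix_mul_sum_left matrix_mul_assoc adjoint_mult adjoint_sift_proj)

lemma branch_op_projR_gram:
  fixes KA :: "'sa \<Rightarrow> complex^'ha::finite^'ea::finite"
    and KB :: "'sb \<Rightarrow> complex^'hb::finite^(('hb \<times> 'sb::finite) \<times> 'wb::finite)"
    and g :: "'sa \<Rightarrow> 'sb \<Rightarrow> 'y \<Rightarrow> 'r::finite"
  assumes supp: "\<forall>a e. selA e \<noteq> a \<longrightarrow> KA a $ e = 0"
  shows "adjoint (branch_op selA Ks g fB KA KB R (a, b)) ** projR j ** branch_op selA Ks g fB KA KB R (a', b')
    = adjoint R ** (\<chi> h h'. (adjoint (KA a) ** KA a') $ fst h $ fst h' *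
        (\<Sum>eB\<in>UNIV. cnj (KB b $ eB $ snd h) * key_indicator Ks g fB j a eB * KB b' $ eB $ snd h')) ** R"
proof -
  let ?V = "key_op selA Ks g fB" and ?P = "sift_proj selA Ks"
  let ?N = "kron (KA a) (KB b)" and ?N' = "kron (KA a') (KB b')"
  let ?Q = "cdiag (\<lambda>e. key_indicator Ks g fB j (selA (fst e)) (snd e))"
  have "adjoint (branch_op selA Ks g fB KA KB R (a, b)) ** projR j ** branch_op selA Ks g fB KA KB R (a', b')
     = adjoint R ** (adjoint ?N ** (?P ** (adjoint ?V ** projR j ** ?V) ** ?P) ** ?N') ** R"
    by (simp add: branch_op_def adjoint_mult adjoint_sift_proj matrix_mul_assoc)
  also have "\<dots> = adjoint R ** (adjoint ?N ** ?Q ** ?N') ** R"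
    by (simp only: sift_key_projR_sandwich)
  also have "adjoint ?N ** ?Q ** ?N' = (\<chi> h h'. (adjoint (KA a) ** KA a') $ fst h $ fst h' *
      (\<Sum>eB\<in>UNIV. cnj (KB b $ eB $ snd h) * key_indicator Ks g fB j a eB * KB b' $ eB $ snd h'))"
    by (simp only: vec_eq_iff kron_cdiag_sandwich_nth[OF supp] vec_lambda_beta) simp
  finally show ?thesis .
qed

lemma branch_op_projR_gram_eq:
  fixes KB :: "'sb \<Rightarrow> complex^'hb::finite^(('hb \<times> 'sb::finite) \<times> 'wb::finite)"
  assumes "\<forall>a e. selA e \<noteq> a \<longrightarrow> KA a $ e = 0"
    and "\<forall>a e. selA' e \<noteq> a \<longrightarrow> KA' a $ e = 0"
    and "\<And>a a'. adjoint (KA a) ** KA a' = adjoint (KA' a) ** KA' a'"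
  shows "adjoint (branch_op selA Ks g fB KA KB R s) ** projR j ** branch_op selA Ks g fB KA KB R s'
    = adjoint (branch_op selA' Ks g fB KA' KB R s) ** projR j ** branch_op selA' Ks g fB KA' KB R s'"
proof -
  obtain a b a' b' where "s = (a, b)" "s' = (a', b')" by fastforce
  then show ?thesis
    by (simp only: branch_op_projR_gram[OF assms(1)] branch_op_projR_gram[OF assms(2)] assms(3))
qed

theorem mainTheorem2:
  fixes PA :: "'x::finite \<Rightarrow> complex^'ha::finite^'ha"
    and PB :: "'y::finite \<Rightarrow> complex^'hb::finite^'hb"
    and fA :: "'sa::finite \<Rightarrow> 'wa::finite \<Rightarrow> 'x"
    and fB :: "'sb::finite \<Rightarrow> 'wb::finite \<Rightarrow> 'y"
    and Ks :: "('sa \<times> 'sb) set"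
    and g :: "'sa \<Rightarrow> 'sb \<Rightarrow> 'y \<Rightarrow> 'r::finite"
    and \<rho> :: "complex^('ha \<times> 'hb)^('ha \<times> 'hb)"
  assumes "povm PA" and "povm PB"
    and "bij (\<lambda>(a, \<alpha>). fA a \<alpha>)"
    and "bij (\<lambda>(b, \<beta>). fB b \<beta>)"
    and "density_op \<rho>"
  shows "rel_entropy (G_map PA fA PB fB Ks g \<rho>) (pinch (G_map PA fA PB fB Ks g \<rho>))
       = rel_entropy (G'_map PA fA PB fB Ks g \<rho>) (pinch (G'_map PA fA PB fB Ks g \<rho>))"
proof -
  have PA_psd: "\<forall>x. psd (PA x)" using assms(1) by (simp add: povm_def)
  have "psd \<rho>" using assms(5) by (simp add: density_op_def)
  then obtain R :: "complex^('ha \<times> 'hb)^('ha \<times> 'hb)" where \<rho>: "\<rho> = R ** adjoint R"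
    by (rule psd_eq_gram)
  have supp: "\<forall>a e. snd (fst e) \<noteq> a \<longrightarrow> Kraus PA fA a $ e = 0"
    by (simp add: vec_eq_iff Kraus_nth)
  have supp': "\<forall>a e. snd e \<noteq> a \<longrightarrow> Kraus' PA fA a $ e = 0"
    by (simp add: vec_eq_iff Kraus'_nth)
  have "adjoint (Kraus PA fA a) ** Kraus PA fA a' = adjoint (Kraus' PA fA a) ** Kraus' PA fA a'" for a a'
    by (simp only: adjoint_Kraus_mult_Kraus[OF PA_psd] adjoint_Kraus'_mult_Kraus'[OF PA_psd])
  from branch_op_projR_gram_eq[OF supp supp' this]
  show ?thesis
    unfolding G_map_def G'_map_def Let_def \<rho> postprocess_eq_hstack_gram
    by (rule rel_entropy_pinch_hstack_eq)
qed

end
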